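(* Let $(N,v)$ be a balanced game. Every coalition that is minimal with respect to inclusion in $\mathscr{E}(N,v)$ is strictly vital-exact.
   Context: A game $(N,v)$: $N$ finite nonempty, $v:2^N\to\mathbb{R}$, $v(\varnothing)=0$; $x(S)=\sum_{i\in S}x_i$. Core: $C(N,v)=\{x\in\mathbb{R}^N\mid x(N)=v(N),\ x(S)\ge v(S)\ \forall S\subseteq N\}$; the game is balanced if $C(N,v)\ne\varnothing$. A coalition (nonempty $S\subseteq N$) is effective if $x(S)=v(S)$ for all $x\in C(N,v)$; $\mathscr{E}(N,v)$ is the set of effective coalitions. A coalition $S$ is strictly vital-exact if there exists $x\in C(N,v)$ with $x(S)=v(S)$ and $x(T)>v(T)$ for all $T\in 2^S\setminus\{\varnothing,S\}$. *)

theory Defs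
  imports Complex_Main "HOL-Library.FuncSet"
begin

text \<open>A TU game (N,v): N finite nonempty player set, v a function on coalitions with
v {} = 0. Payoff vectors in R^N are represented as real functions on N
(extensional: value 0 outside N).\<close>

definition game :: "'a set \<Rightarrow> ('a set \<Rightarrow> real) \<Rightarrow> bool" where
  "game N v \<longleftrightarrow> finite N \<and> N \<noteq> {} \<and> v {} = 0"

definition core :: "'a set \<Rightarrow> ('a set \<Rightarrow> real) \<Rightarrow> ('a \<Rightarrow> real) set" where
  "core N v = {x \<in> extensional N. sum x N = v N \<and> (\<forall>S. S \<subseteq> N \<longrightarrow> sum x S \<ge> v S)}"

definition balanced :: "'a set \<Rightarrow> ('a set \<Rightarrow> real) \<Rightarrow> bool" where
  "balanced N v \<longleftrightarrow> core N v \<noteq> {}"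

definition effective_coalitions :: "'a set \<Rightarrow> ('a set \<Rightarrow> real) \<Rightarrow> 'a set set" where
  "effective_coalitions N v =
     {S. S \<subseteq> N \<and> S \<noteq> {} \<and> (\<forall>x \<in> core N v. sum x S = v S)}"

definition strictly_vital_exact :: "'a set \<Rightarrow> ('a set \<Rightarrow> real) \<Rightarrow> 'a set \<Rightarrow> bool" where
  "strictly_vital_exact N v S \<longleftrightarrow>
     (\<exists>x \<in> core N v. sum x S = v S \<and>
        (\<forall>T. T \<subseteq> S \<and> T \<noteq> {} \<and> T \<noteq> S \<longrightarrow> sum x T > v T))"

end

theory Submission
  imports Defs
begin

text \<open>The core is convex, and the average of finitely many core points is strictly above
\<open>v T\<close> on every coalition \<open>T\<close> on which one of them is. If \<open>S\<close> is minimal effective, no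
proper nonempty \<open>T \<subset> S\<close> is effective, so each has a core point with \<open>x(T) > v(T)\<close>;
their average is strict on all of them at once, while \<open>x(S) = v(S)\<close> on the whole core.\<close>

definition core_mean :: "'a set \<Rightarrow> 'b set \<Rightarrow> ('b \<Rightarrow> 'a \<Rightarrow> real) \<Rightarrow> 'a \<Rightarrow> real" where
  "core_mean N I f = restrict (\<lambda>i. (\<Sum>j\<in>I. f j i) / card I) N"

lemma core_sum_ge: "x \<in> core N v \<Longrightarrow> A \<subseteq> N \<Longrightarrow> v A \<le> sum x A"
  by (simp add: core_def)

lemma sum_core_mean:
  assumes "A \<subseteq> N"
  shows "sum (core_mean N I f) A = (\<Sum>j\<in>I. sum (f j) A) / card I"
proof -
  have "sum (core_mean N I f) A = (\<Sum>i\<in>A. (\<Sum>j\<in>I. f j i) / card I)"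
    using assms by (intro sum.cong) (auto simp: core_mean_def)
  also have "\<dots> = (\<Sum>j\<in>I. sum (f j) A) / card I"
    by (simp add: sum_divide_distrib[symmetric] sum.swap[of _ I])
  finally show ?thesis .
qed

lemma mean_ge:
  fixes a :: "'b \<Rightarrow> real"
  assumes "finite I" "I \<noteq> {}" "\<And>j. j \<in> I \<Longrightarrow> c \<le> a j"
  shows "c \<le> (\<Sum>j\<in>I. a j) / card I"
proof -
  have "card I * c \<le> (\<Sum>j\<in>I. a j)"
    using sum_mono[of I "\<lambda>_. c" a] assms(3) by simp
  then show ?thesis
    using assms(1,2) by (simp add: pos_le_divide_eq card_gt_0_iff mult.commute)
qed

lemma mean_gt:
  fixes a :: "'b \<Rightarrow> real"
  assumes "finite I" "\<And>j. j \<in> I \<Longrightarrow> c \<le> a j" "k \<in> I" "c < a k"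
  shows "c < (\<Sum>j\<in>I. a j) / card I"
proof -
  have "card I * c < (\<Sum>j\<in>I. a j)"
    using sum_strict_mono_ex1[OF assms(1), of "\<lambda>_. c" a] assms(2-4) by auto
  moreover have "card I > 0"
    using assms(1,3) card_gt_0_iff by blast
  ultimately show ?thesis
    by (simp add: pos_less_divide_eq mult.commute)
qed

lemma core_mean_mem_core:
  assumes "finite I" "I \<noteq> {}" "f ` I \<subseteq> core N v"
  shows "core_mean N I f \<in> core N v"
proof -
  have core_f: "\<And>j. j \<in> I \<Longrightarrow> f j \<in> core N v"
    using assms(3) by blast
  have "sum (core_mean N I f) N = (\<Sum>j\<in>I. v N) / card I"
    using core_f by (simp add: sum_core_mean core_def)
  also have "\<dots> = v N"
    using assms(1,2) by simp
  finally have "sum (core_mean N I f) N = v N" .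
  moreover have "v A \<le> sum (core_mean N I f) A" if "A \<subseteq> N" for A
    unfolding sum_core_mean[OF that]
    using assms(1,2) core_f that by (intro mean_ge) (auto intro: core_sum_ge)
  ultimately show ?thesis
    by (simp add: core_def core_mean_def)
qed

lemma core_mean_strict:
  assumes "finite I" "f ` I \<subseteq> core N v" "A \<subseteq> N" "k \<in> I" "v A < sum (f k) A"
  shows "v A < sum (core_mean N I f) A"
  unfolding sum_core_mean[OF assms(3)]
  using assms by (intro mean_gt) (auto intro: core_sum_ge)

lemma core_strict_on_finite_family:
  assumes "balanced N v" "finite \<T>"
    and "\<And>T. T \<in> \<T> \<Longrightarrow> T \<subseteq> N \<and> (\<exists>y \<in> core N v. v T < sum y T)"
  shows "\<exists>x \<in> core N v. \<forall>T \<in> \<T>. v T < sum x T"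
proof (cases "\<T> = {}")
  case True
  then show ?thesis
    using assms(1) by (auto simp: balanced_def)
next
  case False
  obtain f where f: "\<And>T. T \<in> \<T> \<Longrightarrow> f T \<in> core N v \<and> v T < sum (f T) T"
    using assms(3) by metis
  then have "f ` \<T> \<subseteq> core N v"
    by blast
  then show ?thesis
    using assms(2,3) False f core_mean_mem_core core_mean_strict by metis
qed

lemma not_effective_imp_strict:
  assumes "T \<subseteq> N" "T \<noteq> {}" "T \<notin> effective_coalitions N v"
  shows "\<exists>y \<in> core N v. v T < sum y T"
  using assms core_sum_ge[of _ N v T]
  by (force simp: effective_coalitions_def order.order_iff_strict)

theorem mainTheorem8:
  fixes N :: "'a set" and v :: "'a set \<Rightarrow> real" and S :: "'a set"
  assumes "game N v"
    and "balanced N v"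
    and "S \<in> effective_coalitions N v"
    and "\<forall>T \<in> effective_coalitions N v. T \<subseteq> S \<longrightarrow> T = S"
  shows "strictly_vital_exact N v S"
proof -
  define \<T> where "\<T> = {T. T \<subseteq> S \<and> T \<noteq> {} \<and> T \<noteq> S}"
  have SN: "S \<subseteq> N" and S_tight: "\<forall>x \<in> core N v. sum x S = v S"
    using assms(3) by (auto simp: effective_coalitions_def)
  have "finite S"
    using assms(1) SN finite_subset by (auto simp: game_def)
  then have "finite \<T>"
    unfolding \<T>_def by simp
  moreover have "T \<subseteq> N \<and> (\<exists>y \<in> core N v. v T < sum y T)" if "T \<in> \<T>" for T
    using that SN assms(4) by (intro conjI not_effective_imp_strict) (auto simp: \<T>_def)
  ultimately obtain x where "x \<in> core N v" "\<forall>T \<in> \<T>. v T < sum x T"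
    using core_strict_on_finite_family[OF assms(2)] by blast
  then show ?thesis
    using S_tight by (auto simp: strictly_vital_exact_def \<T>_def)
qed

end
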